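(* Let $N\ge1$, $\phi_r\in\mathbb{R}$, $\sigma_r^2>0$. For $t=1,\dots,T$ independently let $\theta_t\sim\mathcal{N}(\phi_r,\sigma_r^2)$ and conditionally on $\theta_t$ let $x_{t,1},\dots,x_{t,N}$ be independent $\mathcal{N}(\theta_t,1)$. Let $\bar x_t=\frac1N\sum_n x_{t,n}$, $\bar x=\frac1T\sum_t\bar x_t$, $S=\frac1T\sum_t(\bar x_t-\bar x)^2$, and consider gradient descent on $\sigma^2\mapsto\ell_{\mathrm{joint}}(\hat\theta_{1:T}(\sigma^2),\hat\phi(\sigma^2),\sigma^2)$, where $$\ell_{\mathrm{joint}}(\theta_{1:T},\phi,\sigma^2)=\frac T2\log\sigma^2+\frac12\sum_{t=1}^T\frac{(\theta_t-\phi)^2}{\sigma^2}+\frac12\sum_{t=1}^T\sum_{n=1}^N(x_{t,n}-\theta_t)^2$$ and $(\hat\phi(\sigma^2),\hat\theta_{1:T}(\sigma^2))$ minimizes $\ell_{\mathrm{joint}}$ over $(\phi,\theta_{1:T})$; this diverges to $0^+$ when $S<4/N$ or when $\sigma^2$ is initialized in $\big(0,\tfrac12(S-\tfrac2N-\sqrt{S(S-\tfrac4N)})\big)$, and otherwise converges to $\tfrac12(S-\tfrac2N+\sqrt{S(S-\tfrac4N)})$. Then as $T\to\infty$, the condition $S<\frac4N$ becomes equivalent to $\sigma_r^2<\frac3N$, the upper endpoint of the initialization interval becomes $$\tfrac12\Big(\sigma_r^2-\tfrac1N-\sqrt{(\sigma_r^2+\tfrac1N)(\sigma_r^2-\tfrac3N)}\Big),$$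 and beyond this endpoint the $\sigma^2$ estimate converges to $$\hat\sigma^2=\tfrac12\Big(\sigma_r^2-\tfrac1N+\sqrt{(\sigma_r^2+\tfrac1N)(\sigma_r^2-\tfrac3N)}\Big).$$
   Context: The limits as $T\to\infty$ are in probability (they follow from $S\to\sigma_r^2+\tfrac1N$). *)

theory Defs
  imports "HOL-Probability.Probability"
begin

definition conv_in_prob :: "'a measure \<Rightarrow> (nat \<Rightarrow> 'a \<Rightarrow> real) \<Rightarrow> real \<Rightarrow> bool" where
  "conv_in_prob M X c \<longleftrightarrow>
     (\<forall>e>0. (\<lambda>T. measure M {\<omega> \<in> space M. \<bar>X T \<omega> - c\<bar> > e}) \<longlonglongrightarrow> 0)"

definition group_mean :: "nat \<Rightarrow> (nat \<Rightarrow> nat \<Rightarrow> 'a \<Rightarrow> real) \<Rightarrow> nat \<Rightarrow> 'a \<Rightarrow> real" where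
  "group_mean N x t \<omega> = (\<Sum>n<N. x t n \<omega>) / real N"

definition grand_mean :: "nat \<Rightarrow> (nat \<Rightarrow> nat \<Rightarrow> 'a \<Rightarrow> real) \<Rightarrow> nat \<Rightarrow> 'a \<Rightarrow> real" where
  "grand_mean N x T \<omega> = (\<Sum>t<T. group_mean N x t \<omega>) / real T"

definition stat_S :: "nat \<Rightarrow> (nat \<Rightarrow> nat \<Rightarrow> 'a \<Rightarrow> real) \<Rightarrow> nat \<Rightarrow> 'a \<Rightarrow> real" where
  "stat_S N x T \<omega> = (\<Sum>t<T. (group_mean N x t \<omega> - grand_mean N x T \<omega>)\<^sup>2) / real T"

text \<open>Upper endpoint of the divergent initialization interval, and the limit of gradient descent
  on the profiled joint loss, as functions of S (from the preceding result).\<close>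
definition gd_lower_endpoint :: "nat \<Rightarrow> real \<Rightarrow> real" where
  "gd_lower_endpoint N s = (s - 2 / real N - sqrt (s * (s - 4 / real N))) / 2"

definition gd_limit :: "nat \<Rightarrow> real \<Rightarrow> real" where
  "gd_limit N s = (s - 2 / real N + sqrt (s * (s - 4 / real N))) / 2"

end

theory Submission
  imports Defs
begin

text \<open>The group means are independent and distributed as \<open>\<N>(\<phi>\<^sub>r, \<sigma>\<^sub>r\<^sup>2 + 1/N)\<close>, and \<open>S\<close> is their
  empirical variance: the mean of the squared centred group means minus the squared mean of the
  centred group means. Chebyshev's weak law of large numbers, applied to both, and the continuous
  mapping theorem give \<open>S \<rightarrow> \<sigma>\<^sub>r\<^sup>2 + 1/N\<close> in probability. The claims follow since
  \<open>4/N - 1/N = 3/N\<close>, and since the endpoint and the limit of gradient descent are continuous in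
  \<open>S\<close>, where at \<open>S = \<sigma>\<^sub>r\<^sup>2 + 1/N\<close> one has \<open>S - 2/N = \<sigma>\<^sub>r\<^sup>2 - 1/N\<close> and
  \<open>S (S - 4/N) = (\<sigma>\<^sub>r\<^sup>2 + 1/N)(\<sigma>\<^sub>r\<^sup>2 - 3/N)\<close>.\<close>

section \<open>Sums and moments of independent random variables\<close>

lemma integrable_mult_of_square_integrable:
  fixes f g :: "'a \<Rightarrow> real"
  assumes [measurable]: "f \<in> borel_measurable M" "g \<in> borel_measurable M"
    and "integrable M (\<lambda>\<omega>. (f \<omega>)\<^sup>2)" "integrable M (\<lambda>\<omega>. (g \<omega>)\<^sup>2)"
  shows "integrable M (\<lambda>\<omega>. f \<omega> * g \<omega>)"
proof (rule Bochner_Integration.integrable_bound)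
  show "integrable M (\<lambda>\<omega>. (f \<omega>)\<^sup>2 + (g \<omega>)\<^sup>2)"
    using assms(3,4) by simp
  show "AE \<omega> in M. norm (f \<omega> * g \<omega>) \<le> norm ((f \<omega>)\<^sup>2 + (g \<omega>)\<^sup>2)"
  proof (intro AE_I2)
    fix \<omega>
    have "norm (f \<omega> * g \<omega>) \<le> 2 * \<bar>f \<omega>\<bar> * \<bar>g \<omega>\<bar>"
      by (simp add: abs_mult)
    also have "\<dots> \<le> \<bar>f \<omega>\<bar>\<^sup>2 + \<bar>g \<omega>\<bar>\<^sup>2"
      by (rule sum_squares_bound)
    finally show "norm (f \<omega> * g \<omega>) \<le> norm ((f \<omega>)\<^sup>2 + (g \<omega>)\<^sup>2)"
      by simp
  qed
qed simp

lemma integrable_square_sum: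
  fixes U :: "'i \<Rightarrow> 'a \<Rightarrow> real"
  assumes "\<And>i. i \<in> I \<Longrightarrow> U i \<in> borel_measurable M"
    and "\<And>i. i \<in> I \<Longrightarrow> integrable M (\<lambda>\<omega>. (U i \<omega>)\<^sup>2)"
  shows "integrable M (\<lambda>\<omega>. (\<Sum>i\<in>I. U i \<omega>)\<^sup>2)"
proof -
  have "integrable M (\<lambda>\<omega>. U s \<omega> * U t \<omega>)" if "s \<in> I" "t \<in> I" for s t
    using that assms by (intro integrable_mult_of_square_integrable) auto
  then show ?thesis
    by (simp add: power2_eq_square sum_product)
qed

text \<open>No hypothesis \<open>T > 0\<close> is needed: for \<open>T = 0\<close> both sides are \<open>0\<close>, as \<open>x / 0 = 0\<close>.\<close>

lemma sample_variance_eq: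
  fixes w :: "nat \<Rightarrow> real"
  shows "(\<Sum>t<T. (w t - (\<Sum>s<T. w s) / real T)\<^sup>2) / real T
    = (\<Sum>t<T. (w t - c)\<^sup>2) / real T - ((\<Sum>t<T. w t - c) / real T)\<^sup>2"
proof (cases "T = 0")
  case False
  define a where "a t = w t - c" for t
  define m where "m = (\<Sum>t<T. a t) / real T"
  have "(\<Sum>s<T. w s) / real T = c + m"
    using False by (simp add: m_def a_def sum_subtractf field_simps)
  then have "(\<Sum>t<T. (w t - (\<Sum>s<T. w s) / real T)\<^sup>2) = (\<Sum>t<T. (a t - m)\<^sup>2)"
    by (simp add: a_def algebra_simps)
  also have "\<dots> = (\<Sum>t<T. (a t)\<^sup>2) - 2 * (\<Sum>t<T. a t) * m + real T * m\<^sup>2"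
    unfolding power2_diff sum.distrib sum_subtractf sum_distrib_left[symmetric]
      sum_distrib_right[symmetric] by simp
  also have "\<dots> = (\<Sum>t<T. (a t)\<^sup>2) - real T * m\<^sup>2"
    using False by (simp add: m_def power2_eq_square)
  finally show ?thesis
    using False by (simp add: m_def a_def diff_divide_distrib)
qed simp

context prob_space
begin

lemma variance_sum_indep:
  fixes U :: "'i \<Rightarrow> 'a \<Rightarrow> real"
  assumes I: "finite I" and indep: "indep_vars (\<lambda>_. borel) U I"
    and square_int: "\<And>i. i \<in> I \<Longrightarrow> integrable M (\<lambda>\<omega>. (U i \<omega>)\<^sup>2)"
  shows "variance (\<lambda>\<omega>. \<Sum>i\<in>I. U i \<omega>) = (\<Sum>i\<in>I. variance (U i))"
proof -
  have meas_U: "U i \<in> borel_measurable M" if "i \<in> I" for i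
    using indep that unfolding indep_vars_def by auto
  have int: "integrable M (U i)" if "i \<in> I" for i
    using square_integrable_imp_integrable meas_U square_int that by blast
  define V where "V = (\<lambda>i \<omega>. U i \<omega> - expectation (U i))"
  have int_V: "integrable M (V i)" if "i \<in> I" for i
    using int[OF that] by (simp add: V_def)
  have E_V: "expectation (V i) = 0" if "i \<in> I" for i
    using int[OF that] by (simp add: V_def prob_space)
  have meas_V: "V i \<in> borel_measurable M" if "i \<in> I" for i
    using meas_U[OF that] unfolding V_def by measurable
  have "integrable M (\<lambda>\<omega>. (V i \<omega>)\<^sup>2)" if "i \<in> I" for i
    using int[OF that] square_int[OF that] by (simp add: V_def power2_diff)
  then have int_VV: "integrable M (\<lambda>\<omega>. V s \<omega> * V t \<omega>)" if "s \<in> I" "t \<in> I" for s t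
    using that meas_V by (intro integrable_mult_of_square_integrable) auto
  have indep_V: "indep_vars (\<lambda>_. borel) V I"
    unfolding V_def by (rule indep_vars_compose2[OF indep, where Y="\<lambda>i u. u - expectation (U i)"]) simp
  have E_VV: "expectation (\<lambda>\<omega>. V s \<omega> * V t \<omega>) = (if s = t then variance (U s) else 0)"
    if "s \<in> I" "t \<in> I" for s t
  proof (cases "s = t")
    case True
    then show ?thesis
      by (simp add: V_def power2_eq_square)
  next
    case False
    have "indep_vars (\<lambda>_. borel) V {s, t}"
      using that by (intro indep_vars_subset[OF indep_V]) auto
    then have "expectation (\<lambda>\<omega>. \<Prod>i\<in>{s, t}. V i \<omega>) = (\<Prod>i\<in>{s, t}. expectation (V i))"
      using that int_V by (intro indep_vars_lebesgue_integral) auto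
    then show ?thesis
      using False that E_V by simp
  qed
  have centered_sum: "(\<Sum>i\<in>I. U i \<omega>) - expectation (\<lambda>\<omega>. \<Sum>i\<in>I. U i \<omega>) = (\<Sum>i\<in>I. V i \<omega>)" for \<omega>
    using int by (simp add: V_def sum_subtractf)
  have "variance (\<lambda>\<omega>. \<Sum>i\<in>I. U i \<omega>) = expectation (\<lambda>\<omega>. \<Sum>s\<in>I. \<Sum>t\<in>I. V s \<omega> * V t \<omega>)"
    unfolding centered_sum by (simp add: power2_eq_square sum_product)
  also have "\<dots> = (\<Sum>s\<in>I. \<Sum>t\<in>I. expectation (\<lambda>\<omega>. V s \<omega> * V t \<omega>))"
    using int_VV by simp
  also have "\<dots> = (\<Sum>i\<in>I. variance (U i))"
    using I by (simp add: E_VV if_distrib cong: sum.cong)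
  finally show ?thesis .
qed

lemma prob_sample_mean_deviation_le:
  fixes U :: "nat \<Rightarrow> 'a \<Rightarrow> real"
  assumes indep: "indep_vars (\<lambda>_. borel) U {..<T}"
    and square_int: "\<And>t. t < T \<Longrightarrow> integrable M (\<lambda>\<omega>. (U t \<omega>)\<^sup>2)"
    and mean: "\<And>t. t < T \<Longrightarrow> expectation (U t) = \<mu>"
    and variance_bound: "\<And>t. t < T \<Longrightarrow> variance (U t) \<le> C"
    and "T \<ge> 1" and "e > 0"
  shows "prob {\<omega> \<in> space M. \<bar>(\<Sum>t<T. U t \<omega>) / real T - \<mu>\<bar> > e} \<le> C / real T / e\<^sup>2"
proof -
  have rv [measurable]: "U t \<in> borel_measurable M" if "t < T" for t
    using indep that unfolding indep_vars_def by auto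
  have int: "integrable M (U t)" if "t < T" for t
    by (rule square_integrable_imp_integrable[OF rv[OF that] square_int[OF that]])
  define f where "f = (\<lambda>\<omega>. (\<Sum>t<T. U t \<omega>) / real T)"
  have "integrable M (\<lambda>\<omega>. (\<Sum>t<T. U t \<omega>)\<^sup>2 / (real T)\<^sup>2)"
    using integrable_square_sum[of "{..<T}" U] rv square_int by simp
  then have square_int_f: "integrable M (\<lambda>\<omega>. (f \<omega>)\<^sup>2)"
    by (simp add: f_def power_divide)
  have E_sum: "expectation (\<lambda>\<omega>. \<Sum>t<T. U t \<omega>) = real T * \<mu>"
    using int by (simp add: mean)
  then have E_f: "expectation f = \<mu>"
    using \<open>T \<ge> 1\<close> by (simp add: f_def)
  have "f \<omega> - expectation f = ((\<Sum>t<T. U t \<omega>) - expectation (\<lambda>\<omega>. \<Sum>t<T. U t \<omega>)) / real T" for \<omega>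
    using \<open>T \<ge> 1\<close> unfolding E_f E_sum by (simp add: f_def field_simps)
  then have "variance f = variance (\<lambda>\<omega>. \<Sum>t<T. U t \<omega>) / (real T)\<^sup>2"
    by (simp add: power_divide)
  also have "\<dots> = (\<Sum>t<T. variance (U t)) / (real T)\<^sup>2"
    using variance_sum_indep[OF _ indep] square_int by simp
  also have "\<dots> \<le> (real T * C) / (real T)\<^sup>2"
    using sum_mono[of "{..<T}" "\<lambda>t. variance (U t)" "\<lambda>_. C"] variance_bound
    by (intro divide_right_mono) auto
  also have "\<dots> = C / real T"
    using \<open>T \<ge> 1\<close> by (simp add: power2_eq_square)
  finally have "variance f / e\<^sup>2 \<le> C / real T / e\<^sup>2"
    by (rule divide_right_mono) simp
  moreover have "prob {\<omega> \<in> space M. \<bar>f \<omega> - \<mu>\<bar> \<ge> e} \<le> variance f / e\<^sup>2"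
    using Chebyshev_inequality[of f e] square_int_f \<open>e > 0\<close> E_f by (simp add: f_def)
  moreover have "prob {\<omega> \<in> space M. \<bar>f \<omega> - \<mu>\<bar> > e} \<le> prob {\<omega> \<in> space M. \<bar>f \<omega> - \<mu>\<bar> \<ge> e}"
  proof (rule finite_measure_mono)
    show "{\<omega> \<in> space M. \<bar>f \<omega> - \<mu>\<bar> \<ge> e} \<in> events"
      unfolding f_def by measurable
  qed auto
  ultimately show ?thesis
    unfolding f_def by linarith
qed

theorem weak_law_of_large_numbers:
  fixes U :: "nat \<Rightarrow> 'a \<Rightarrow> real"
  assumes indep: "indep_vars (\<lambda>_. borel) U UNIV"
    and square_int: "\<And>t. integrable M (\<lambda>\<omega>. (U t \<omega>)\<^sup>2)"
    and mean: "\<And>t. expectation (U t) = \<mu>"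
    and variance_bound: "\<And>t. variance (U t) \<le> C"
  shows "conv_in_prob M (\<lambda>T \<omega>. (\<Sum>t<T. U t \<omega>) / real T) \<mu>"
  unfolding conv_in_prob_def
proof (intro allI impI)
  fix e :: real
  assume "e > 0"
  have "(\<lambda>T. C / e\<^sup>2 * inverse (real T)) \<longlonglongrightarrow> C / e\<^sup>2 * 0"
    by (intro tendsto_mult tendsto_const tendsto_inverse_0_at_top filterlim_real_sequentially)
  then have bound_0: "(\<lambda>T. C / real T / e\<^sup>2) \<longlonglongrightarrow> 0"
    by (simp add: divide_inverse ac_simps)
  show "(\<lambda>T. prob {\<omega> \<in> space M. \<bar>(\<Sum>t<T. U t \<omega>) / real T - \<mu>\<bar> > e}) \<longlonglongrightarrow> 0"
  proof (rule tendsto_sandwich[OF _ _ tendsto_const bound_0])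
    show "\<forall>\<^sub>F T in sequentially. prob {\<omega> \<in> space M. \<bar>(\<Sum>t<T. U t \<omega>) / real T - \<mu>\<bar> > e}
        \<le> C / real T / e\<^sup>2"
      using eventually_ge_at_top[of 1]
    proof eventually_elim
      case (elim T)
      show ?case
        using indep_vars_subset[OF indep] square_int mean variance_bound elim \<open>e > 0\<close>
        by (intro prob_sample_mean_deviation_le) auto
    qed
  qed simp
qed

lemma indep_vars_block_sums:
  fixes X :: "'i \<Rightarrow> 'a \<Rightarrow> real"
  assumes indep: "indep_vars (\<lambda>_. borel) X I"
    and blocks: "\<And>j. j \<in> L \<Longrightarrow> K j \<subseteq> I" and disjoint: "disjoint_family_on K L"
  shows "indep_vars (\<lambda>_. borel) (\<lambda>j \<omega>. \<Sum>i\<in>K j. w i * X i \<omega>) L"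
proof -
  have "indep_vars (\<lambda>_. borel) (\<lambda>j \<omega>. (\<lambda>f. \<Sum>i\<in>K j. w i * f i) (restrict (\<lambda>i. X i \<omega>) (K j))) L"
    using indep_vars_restrict[OF indep blocks disjoint] by (rule indep_vars_compose2) measurable
  then show ?thesis
    by simp
qed

lemma normal_distributed_square_moments:
  assumes X: "distributed M lborel X (normal_density 0 \<sigma>)" and "\<sigma> > 0"
  shows "integrable M (\<lambda>\<omega>. (X \<omega>)\<^sup>2)" and "expectation X = 0"
    and "variance X = \<sigma>\<^sup>2" and "expectation (\<lambda>\<omega>. (X \<omega>)\<^sup>2) = \<sigma>\<^sup>2"
    and "integrable M (\<lambda>\<omega>. ((X \<omega>)\<^sup>2)\<^sup>2)"
    and "variance (\<lambda>\<omega>. (X \<omega>)\<^sup>2) = 2 * \<sigma> ^ 4"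
proof -
  have moment_int: "integrable M (\<lambda>\<omega>. X \<omega> ^ k)" for k
    using distributed_integrable[OF X, of "\<lambda>y. y ^ k"] \<open>\<sigma> > 0\<close>
      integrable_normal_moment[where \<mu>=0 and \<sigma>=\<sigma> and k=k] by simp
  have moment: "expectation (\<lambda>\<omega>. X \<omega> ^ (2 * k)) = fact (2 * k) / ((2 / \<sigma>\<^sup>2) ^ k * fact k)" for k
    using distributed_integral[OF X, of "\<lambda>y. y ^ (2 * k)"] \<open>\<sigma> > 0\<close>
      integral_normal_moment_even[where \<mu>=0 and \<sigma>=\<sigma> and k=k] by simp
  show "integrable M (\<lambda>\<omega>. (X \<omega>)\<^sup>2)" and "integrable M (\<lambda>\<omega>. ((X \<omega>)\<^sup>2)\<^sup>2)"
    using moment_int[of 2] moment_int[of 4] by (simp_all add: power_mult[symmetric])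
  show "expectation X = 0"
    using normal_distributed_expectation[OF \<open>\<sigma> > 0\<close> X] .
  show "variance X = \<sigma>\<^sup>2"
    using normal_distributed_variance[OF \<open>\<sigma> > 0\<close> X] .
  show square_mean: "expectation (\<lambda>\<omega>. (X \<omega>)\<^sup>2) = \<sigma>\<^sup>2"
    using moment[of 1] \<open>\<sigma> > 0\<close> by simp
  have fourth_moment: "expectation (\<lambda>\<omega>. X \<omega> ^ 4) = 3 * \<sigma> ^ 4"
    using moment[of 2] \<open>\<sigma> > 0\<close> by (simp add: fact_numeral field_simps)
  have "variance (\<lambda>\<omega>. (X \<omega>)\<^sup>2) = expectation (\<lambda>\<omega>. ((X \<omega>)\<^sup>2)\<^sup>2) - (expectation (\<lambda>\<omega>. (X \<omega>)\<^sup>2))\<^sup>2"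
    using moment_int[of 2] moment_int[of 4] by (intro variance_eq) (simp_all add: power_mult[symmetric])
  then show "variance (\<lambda>\<omega>. (X \<omega>)\<^sup>2) = 2 * \<sigma> ^ 4"
    by (simp add: square_mean fourth_moment power_mult[symmetric])
qed

end

section \<open>Convergence in probability\<close>

lemma conv_in_prob_D:
  "conv_in_prob M X c \<Longrightarrow> e > 0 \<Longrightarrow> (\<lambda>T. measure M {\<omega> \<in> space M. \<bar>X T \<omega> - c\<bar> > e}) \<longlonglongrightarrow> 0"
  unfolding conv_in_prob_def by blast

context prob_space
begin

lemma tendsto_prob_0_mono:
  assumes "(\<lambda>T. prob (B T)) \<longlonglongrightarrow> 0" and "\<And>T. B T \<in> events"
    and "\<forall>\<^sub>F T in sequentially. A T \<subseteq> B T"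
  shows "(\<lambda>T. prob (A T)) \<longlonglongrightarrow> 0"
proof (rule tendsto_sandwich[OF _ _ tendsto_const assms(1)])
  show "\<forall>\<^sub>F T in sequentially. 0 \<le> prob (A T)"
    by simp
  show "\<forall>\<^sub>F T in sequentially. prob (A T) \<le> prob (B T)"
    using assms(3) by eventually_elim (rule finite_measure_mono[OF _ assms(2)])
qed

lemma conv_in_prob_continuous:
  assumes conv: "conv_in_prob M X c" and [measurable]: "\<And>T. X T \<in> borel_measurable M"
    and "isCont g c"
  shows "conv_in_prob M (\<lambda>T \<omega>. g (X T \<omega>)) (g c)"
  unfolding conv_in_prob_def
proof (intro allI impI)
  fix e :: real
  assume "e > 0"
  with \<open>isCont g c\<close> obtain d where "d > 0" and d: "\<And>y. \<bar>y - c\<bar> < d \<Longrightarrow> \<bar>g y - g c\<bar> < e"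
    unfolding continuous_at_eps_delta dist_real_def by blast
  from conv half_gt_zero[OF \<open>d > 0\<close>]
  have "(\<lambda>T. prob {\<omega> \<in> space M. \<bar>X T \<omega> - c\<bar> > d / 2}) \<longlonglongrightarrow> 0"
    by (rule conv_in_prob_D)
  then show "(\<lambda>T. prob {\<omega> \<in> space M. \<bar>g (X T \<omega>) - g c\<bar> > e}) \<longlonglongrightarrow> 0"
  proof (rule tendsto_prob_0_mono)
    have "\<bar>X T \<omega> - c\<bar> > d / 2" if "\<bar>g (X T \<omega>) - g c\<bar> > e" for T \<omega>
      using d[of "X T \<omega>"] that \<open>d > 0\<close> by fastforce
    then show "\<forall>\<^sub>F T in sequentially. {\<omega> \<in> space M. \<bar>g (X T \<omega>) - g c\<bar> > e}
        \<subseteq> {\<omega> \<in> space M. \<bar>X T \<omega> - c\<bar> > d / 2}"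
      by (intro always_eventually) blast
  qed measurable
qed

lemma conv_in_prob_diff:
  assumes "conv_in_prob M X a" "conv_in_prob M Y b"
    and [measurable]: "\<And>T. X T \<in> borel_measurable M" "\<And>T. Y T \<in> borel_measurable M"
  shows "conv_in_prob M (\<lambda>T \<omega>. X T \<omega> - Y T \<omega>) (a - b)"
  unfolding conv_in_prob_def
proof (intro allI impI)
  fix e :: real
  assume "e > 0"
  define dev where "dev Z c T = {\<omega> \<in> space M. \<bar>Z T \<omega> - c\<bar> > e / 2}" for Z :: "nat \<Rightarrow> 'a \<Rightarrow> real" and c T
  have dev_events: "dev X a T \<in> events" "dev Y b T \<in> events" for T
    unfolding dev_def by measurable
  have "(\<lambda>T. prob (dev X a T) + prob (dev Y b T)) \<longlonglongrightarrow> 0 + 0"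
    unfolding dev_def using half_gt_zero[OF \<open>e > 0\<close>]
    by (intro tendsto_add conv_in_prob_D assms(1,2))
  then have dev_0: "(\<lambda>T. prob (dev X a T) + prob (dev Y b T)) \<longlonglongrightarrow> 0"
    by simp
  have "(\<lambda>T. prob (dev X a T \<union> dev Y b T)) \<longlonglongrightarrow> 0"
  proof (rule tendsto_sandwich[OF _ _ tendsto_const dev_0])
    show "\<forall>\<^sub>F T in sequentially. prob (dev X a T \<union> dev Y b T) \<le> prob (dev X a T) + prob (dev Y b T)"
      by (intro always_eventually allI measure_Un_le dev_events)
  qed simp
  then show "(\<lambda>T. prob {\<omega> \<in> space M. \<bar>X T \<omega> - Y T \<omega> - (a - b)\<bar> > e}) \<longlonglongrightarrow> 0"
  proof (rule tendsto_prob_0_mono)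
    have "\<omega> \<in> dev X a T \<union> dev Y b T"
      if "\<omega> \<in> {\<omega> \<in> space M. \<bar>X T \<omega> - Y T \<omega> - (a - b)\<bar> > e}" for T \<omega>
    proof -
      have "\<bar>X T \<omega> - Y T \<omega> - (a - b)\<bar> \<le> \<bar>X T \<omega> - a\<bar> + \<bar>Y T \<omega> - b\<bar>"
        using abs_triangle_ineq4[of "X T \<omega> - a" "Y T \<omega> - b"] by (simp add: algebra_simps)
      with that have "e < \<bar>X T \<omega> - a\<bar> + \<bar>Y T \<omega> - b\<bar>"
        by simp
      then have "e / 2 < \<bar>X T \<omega> - a\<bar> \<or> e / 2 < \<bar>Y T \<omega> - b\<bar>"
        by linarith
      then show ?thesis
        using that unfolding dev_def by blast
    qed
    then show "\<forall>\<^sub>F T in sequentially. {\<omega> \<in> space M. \<bar>X T \<omega> - Y T \<omega> - (a - b)\<bar> > e}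
        \<subseteq> dev X a T \<union> dev Y b T"
      by (intro always_eventually allI subsetI)
  qed (intro sets.Un dev_events)
qed

lemma conv_in_prob_prob_less_tendsto_1:
  assumes conv: "conv_in_prob M X c" and [measurable]: "\<And>T. X T \<in> borel_measurable M"
    and "c < a"
  shows "(\<lambda>T. prob {\<omega> \<in> space M. X T \<omega> < a}) \<longlonglongrightarrow> 1"
proof -
  define far where "far T = {\<omega> \<in> space M. \<bar>X T \<omega> - c\<bar> > (a - c) / 2}" for T
  have far_events: "far T \<in> events" for T
    unfolding far_def by measurable
  have "(a - c) / 2 > 0"
    using \<open>c < a\<close> by simp
  with conv have "(\<lambda>T. prob (far T)) \<longlonglongrightarrow> 0"
    unfolding far_def by (rule conv_in_prob_D)
  then have "(\<lambda>T. 1 - prob (far T)) \<longlonglongrightarrow> 1 - 0"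
    by (intro tendsto_diff tendsto_const)
  then have lower_1: "(\<lambda>T. prob (space M - far T)) \<longlonglongrightarrow> 1"
    by (simp add: prob_compl far_events)
  show ?thesis
  proof (rule tendsto_sandwich[OF _ _ lower_1 tendsto_const])
    have "space M - far T \<subseteq> {\<omega> \<in> space M. X T \<omega> < a}" for T
    proof
      fix \<omega>
      assume "\<omega> \<in> space M - far T"
      then have "\<omega> \<in> space M" and "\<bar>X T \<omega> - c\<bar> \<le> (a - c) / 2"
        by (auto simp: far_def not_less)
      with \<open>c < a\<close> abs_ge_self[of "X T \<omega> - c"] show "\<omega> \<in> {\<omega> \<in> space M. X T \<omega> < a}"
        by simp
    qed
    then show "\<forall>\<^sub>F T in sequentially. prob (space M - far T) \<le> prob {\<omega> \<in> space M. X T \<omega> < a}"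
      by (intro always_eventually allI finite_measure_mono) measurable
  qed simp
qed

lemma conv_in_prob_prob_less_tendsto_0:
  assumes conv: "conv_in_prob M X c" and [measurable]: "\<And>T. X T \<in> borel_measurable M"
    and "a < c"
  shows "(\<lambda>T. prob {\<omega> \<in> space M. X T \<omega> < a}) \<longlonglongrightarrow> 0"
proof -
  from conv have "(\<lambda>T. prob {\<omega> \<in> space M. \<bar>X T \<omega> - c\<bar> > c - a}) \<longlonglongrightarrow> 0"
    by (rule conv_in_prob_D) (use \<open>a < c\<close> in simp)
  then show ?thesis
  proof (rule tendsto_prob_0_mono)
    show "\<forall>\<^sub>F T in sequentially. {\<omega> \<in> space M. X T \<omega> < a} \<subseteq> {\<omega> \<in> space M. \<bar>X T \<omega> - c\<bar> > c - a}"
      by (intro always_eventually allI subsetI) auto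
  qed measurable
qed


end

section \<open>The hierarchical normal model\<close>

locale normal_hierarchical_model = prob_space M for M :: "'a measure" +
  fixes N :: nat and \<phi>r sr2 :: real
    and \<theta> :: "nat \<Rightarrow> 'a \<Rightarrow> real" and x :: "nat \<Rightarrow> nat \<Rightarrow> 'a \<Rightarrow> real"
  assumes N_ge_1: "N \<ge> 1" and sr2_pos: "sr2 > 0"
    and \<theta>_normal: "\<And>t. distributed M lborel (\<theta> t) (normal_density \<phi>r (sqrt sr2))"
    and noise_normal: "\<And>t n. n < N \<Longrightarrow> distributed M lborel (\<lambda>\<omega>. x t n \<omega> - \<theta> t \<omega>) (normal_density 0 1)"
    and indep_latent_noise: "indep_vars (\<lambda>_. borel)
           (\<lambda>i \<omega>. case i of Inl t \<Rightarrow> \<theta> t \<omega> | Inr (t, n) \<Rightarrow> x t n \<omega> - \<theta> t \<omega>)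
           (range Inl \<union> Inr ` (UNIV \<times> {..<N}))"
begin

text \<open>The mean of group \<open>t\<close> is a weighted sum over \<open>group_block t\<close>, which indexes \<open>\<theta>\<^sub>t\<close> and the
  \<open>N\<close> noise terms of group \<open>t\<close>; as the blocks are disjoint, different groups are independent.\<close>

definition latent_noise :: "nat + nat \<times> nat \<Rightarrow> 'a \<Rightarrow> real" where
  "latent_noise = (\<lambda>i \<omega>. case i of Inl t \<Rightarrow> \<theta> t \<omega> | Inr (t, n) \<Rightarrow> x t n \<omega> - \<theta> t \<omega>)"

definition group_block :: "nat \<Rightarrow> (nat + nat \<times> nat) set" where
  "group_block t = insert (Inl t) ((\<lambda>n. Inr (t, n)) ` {..<N})"

definition block_weight :: "nat + nat \<times> nat \<Rightarrow> real" where
  "block_weight i = (case i of Inl _ \<Rightarrow> 1 | Inr _ \<Rightarrow> 1 / real N)"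

lemma sum_group_block:
  "(\<Sum>i\<in>group_block t. f i) = f (Inl t) + (\<Sum>n<N. f (Inr (t, n)))"
  unfolding group_block_def by (subst sum.insert) (auto simp: sum.reindex inj_on_def)

lemma group_mean_eq_block_sum:
  "group_mean N x t \<omega> = (\<Sum>i\<in>group_block t. block_weight i * latent_noise i \<omega>)"
proof -
  have "real N > 0"
    using N_ge_1 by simp
  then show ?thesis
    by (simp add: sum_group_block group_mean_def block_weight_def latent_noise_def
        sum_subtractf sum_divide_distrib[symmetric] field_simps)
qed

lemma group_mean_normal:
  "distributed M lborel (group_mean N x t) (normal_density \<phi>r (sqrt (sr2 + 1 / real N)))"
proof -
  define \<mu> where "\<mu> i = (case i of Inl _ \<Rightarrow> \<phi>r | Inr _ \<Rightarrow> 0)" for i :: "nat + nat \<times> nat"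
  define \<sigma> where "\<sigma> i = (case i of Inl _ \<Rightarrow> sqrt sr2 | Inr _ \<Rightarrow> 1 / real N)" for i :: "nat + nat \<times> nat"
  have N_pos: "real N > 0"
    using N_ge_1 by simp
  have "indep_vars (\<lambda>_. borel) (\<lambda>i \<omega>. block_weight i * latent_noise i \<omega>) (group_block t)"
    using indep_vars_subset[OF indep_latent_noise[folded latent_noise_def]]
    by (rule indep_vars_compose2[where Y="\<lambda>i u. block_weight i * u"]) (auto simp: group_block_def)
  moreover have "distributed M lborel (\<lambda>\<omega>. block_weight i * latent_noise i \<omega>) (normal_density (\<mu> i) (\<sigma> i))"
    if "i \<in> group_block t" for i
  proof -
    from that consider "i = Inl t" | n where "n < N" "i = Inr (t, n)"
      unfolding group_block_def by auto
    then show ?thesis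
    proof cases
      case 1
      then show ?thesis
        using \<theta>_normal[of t] by (simp add: block_weight_def latent_noise_def \<mu>_def \<sigma>_def)
    next
      case (2 n)
      have "distributed M lborel (\<lambda>\<omega>. 0 + 1 / real N * (x t n \<omega> - \<theta> t \<omega>))
          (normal_density (0 + 1 / real N * 0) (\<bar>1 / real N\<bar> * 1))"
        using N_pos by (intro normal_density_affine noise_normal \<open>n < N\<close>) simp_all
      then show ?thesis
        using 2 N_pos by (simp add: block_weight_def latent_noise_def \<mu>_def \<sigma>_def)
    qed
  qed
  ultimately have "distributed M lborel (\<lambda>\<omega>. \<Sum>i\<in>group_block t. block_weight i * latent_noise i \<omega>)
      (normal_density (\<Sum>i\<in>group_block t. \<mu> i) (sqrt (\<Sum>i\<in>group_block t. (\<sigma> i)\<^sup>2)))"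
    using sr2_pos N_pos
    by (intro sum_indep_normal) (auto simp: group_block_def \<sigma>_def)
  moreover have "(\<Sum>i\<in>group_block t. \<mu> i) = \<phi>r" and "(\<Sum>i\<in>group_block t. (\<sigma> i)\<^sup>2) = sr2 + 1 / real N"
    using sr2_pos N_pos by (simp_all add: sum_group_block \<mu>_def \<sigma>_def power2_eq_square)
  ultimately show ?thesis
    by (simp add: group_mean_eq_block_sum[abs_def])
qed

lemma group_mean_indep: "indep_vars (\<lambda>_. borel) (group_mean N x) UNIV"
proof -
  have "indep_vars (\<lambda>_. borel) (\<lambda>t \<omega>. \<Sum>i\<in>group_block t. block_weight i * latent_noise i \<omega>) UNIV"
    by (rule indep_vars_block_sums[OF indep_latent_noise[folded latent_noise_def]])
       (auto simp: group_block_def disjoint_family_on_def)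
  then show ?thesis
    by (simp add: group_mean_eq_block_sum[abs_def])
qed

lemma stat_S_eq:
  "stat_S N x T \<omega> = (\<Sum>t<T. (group_mean N x t \<omega> - \<phi>r)\<^sup>2) / real T
     - ((\<Sum>t<T. group_mean N x t \<omega> - \<phi>r) / real T)\<^sup>2"
  unfolding stat_S_def grand_mean_def by (rule sample_variance_eq)

lemma group_mean_measurable [measurable]: "group_mean N x t \<in> borel_measurable M"
  using distributed_measurable[OF group_mean_normal] by simp

lemma stat_S_measurable [measurable]: "stat_S N x T \<in> borel_measurable M"
  unfolding stat_S_eq[abs_def] by measurable

lemma stat_S_conv_in_prob: "conv_in_prob M (stat_S N x) (sr2 + 1 / real N)"
proof -
  define v where "v = sr2 + 1 / real N"
  define W where "W t \<omega> = group_mean N x t \<omega> - \<phi>r" for t \<omega>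
  have "v > 0"
    using sr2_pos by (simp add: v_def add_pos_nonneg)
  then have "sqrt v > 0"
    by simp
  have W_measurable [measurable]: "W t \<in> borel_measurable M" for t
    unfolding W_def by measurable
  have "distributed M lborel (\<lambda>\<omega>. - \<phi>r + 1 * group_mean N x t \<omega>)
      (normal_density (- \<phi>r + 1 * \<phi>r) (\<bar>1\<bar> * sqrt v))" for t
    using \<open>sqrt v > 0\<close> by (intro normal_density_affine) (simp_all add: group_mean_normal v_def)
  then have "distributed M lborel (W t) (normal_density 0 (sqrt v))" for t
    by (simp add: W_def[abs_def])
  note W_moments = normal_distributed_square_moments[OF this \<open>sqrt v > 0\<close>]
  have W_indep: "indep_vars (\<lambda>_. borel) W UNIV"
    unfolding W_def by (rule indep_vars_compose2[OF group_mean_indep, where Y="\<lambda>_ u. u - \<phi>r"]) simp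
  have W2_indep: "indep_vars (\<lambda>_. borel) (\<lambda>t \<omega>. (W t \<omega>)\<^sup>2) UNIV"
    by (rule indep_vars_compose2[OF W_indep, where Y="\<lambda>_ u. u\<^sup>2"]) simp
  have mean_W: "conv_in_prob M (\<lambda>T \<omega>. (\<Sum>t<T. W t \<omega>) / real T) 0"
    using W_moments \<open>v > 0\<close> by (intro weak_law_of_large_numbers[OF W_indep, where C=v]) simp_all
  then have "conv_in_prob M (\<lambda>T \<omega>. ((\<Sum>t<T. W t \<omega>) / real T)\<^sup>2) (0\<^sup>2)"
    by (rule conv_in_prob_continuous) (auto intro!: continuous_intros)
  moreover have "conv_in_prob M (\<lambda>T \<omega>. (\<Sum>t<T. (W t \<omega>)\<^sup>2) / real T) v"
    using W_moments \<open>v > 0\<close>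
    by (intro weak_law_of_large_numbers[OF W2_indep, where C="2 * (sqrt v) ^ 4"]) simp_all
  ultimately have "conv_in_prob M (\<lambda>T \<omega>. (\<Sum>t<T. (W t \<omega>)\<^sup>2) / real T - ((\<Sum>t<T. W t \<omega>) / real T)\<^sup>2) (v - 0\<^sup>2)"
    by (intro conv_in_prob_diff) measurable
  then show ?thesis
    by (simp add: stat_S_eq[abs_def] W_def v_def)
qed

end

theorem corollary1:
  fixes M :: "'a measure" and N :: nat and \<phi>r sr2 :: real
    and \<theta> :: "nat \<Rightarrow> 'a \<Rightarrow> real" and x :: "nat \<Rightarrow> nat \<Rightarrow> 'a \<Rightarrow> real"
  assumes "prob_space M"
    and "N \<ge> 1" and "sr2 > 0"
    and "\<And>t. distributed M lborel (\<theta> t) (normal_density \<phi>r (sqrt sr2))"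
    and "\<And>t n. n < N \<Longrightarrow> distributed M lborel (\<lambda>\<omega>. x t n \<omega> - \<theta> t \<omega>) (normal_density 0 1)"
    and "prob_space.indep_vars M (\<lambda>_. borel)
           (\<lambda>i \<omega>. case i of Inl t \<Rightarrow> \<theta> t \<omega> | Inr (t, n) \<Rightarrow> x t n \<omega> - \<theta> t \<omega>)
           (range Inl \<union> Inr ` (UNIV \<times> {..<N}))"
  shows "(sr2 < 3 / real N \<longrightarrow>
            (\<lambda>T. measure M {\<omega> \<in> space M. stat_S N x T \<omega> < 4 / real N}) \<longlonglongrightarrow> 1)
       \<and> (sr2 > 3 / real N \<longrightarrow>
            (\<lambda>T. measure M {\<omega> \<in> space M. stat_S N x T \<omega> < 4 / real N}) \<longlonglongrightarrow> 0)
       \<and> (sr2 \<ge> 3 / real N \<longrightarrow>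
            conv_in_prob M (\<lambda>T \<omega>. gd_lower_endpoint N (stat_S N x T \<omega>))
              ((sr2 - 1 / real N - sqrt ((sr2 + 1 / real N) * (sr2 - 3 / real N))) / 2)
          \<and> conv_in_prob M (\<lambda>T \<omega>. gd_limit N (stat_S N x T \<omega>))
              ((sr2 - 1 / real N + sqrt ((sr2 + 1 / real N) * (sr2 - 3 / real N))) / 2))"
proof -
  interpret normal_hierarchical_model M N \<phi>r sr2 \<theta> x
    using assms by (intro normal_hierarchical_model.intro normal_hierarchical_model_axioms.intro)
  let ?v = "sr2 + 1 / real N"
  note S = stat_S_conv_in_prob stat_S_measurable
  have four: "4 / real N = 3 / real N + 1 / real N"
    by (simp add: add_divide_distrib[symmetric])
  then have "sr2 < 3 / real N \<longleftrightarrow> ?v < 4 / real N" and "sr2 > 3 / real N \<longleftrightarrow> ?v > 4 / real N"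
    by auto
  moreover have "?v * (?v - 4 / real N) = (sr2 + 1 / real N) * (sr2 - 3 / real N)"
    unfolding four by (simp add: algebra_simps)
  moreover have "?v - 2 / real N = sr2 - 1 / real N"
    by (simp add: diff_divide_distrib[symmetric])
  moreover have "isCont (gd_lower_endpoint N) ?v" and "isCont (gd_limit N) ?v"
    unfolding gd_lower_endpoint_def[abs_def] gd_limit_def[abs_def] by (auto intro!: continuous_intros)
  ultimately show ?thesis
    using conv_in_prob_prob_less_tendsto_1[OF S] conv_in_prob_prob_less_tendsto_0[OF S]
      conv_in_prob_continuous[OF S, of "gd_lower_endpoint N"] conv_in_prob_continuous[OF S, of "gd_limit N"]
    by (simp add: gd_lower_endpoint_def gd_limit_def)
qed

end
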